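(* Let $A$ be an $n\times n$ irreducible nonnegative matrix with largest eigenvalue $1$ and a positive vector $w$ with $Aw=w$ and $A^Tw=w$. For $\alpha\in[0,1]$ let $A_\alpha=\alpha A+(1-\alpha)A^T$. Then for every nonempty $U\subsetneq[n]$, every $b\in\mathbb R^{|U|}$, and every $0\le\beta\le\alpha\le\frac12$, \[ \operatorname{cap}_{U,b}(A_\alpha)\le\operatorname{cap}_{U,b}(A_\beta). \]
   Context: For an irreducible nonnegative $n\times n$ matrix $B$ with PF eigenvalue $1$ and a positive vector $w$ with $Bw=w$, $B^Tw=w$, set $L=I-B$. For nonempty $U\subsetneq[n]$ and $b\in\mathbb R^{|U|}$ (indexed by $U$), there is a unique $q\in\mathbb R^n$ with $q_i=w_ib_i$ for $i\in U$ and $(Lq)_i=0$ for $i\notin U$; define the capacity $\operatorname{cap}_{U,b}(B)=\langle q,Lq\rangle$. (Each $A_\alpha$ is irreducible nonnegative with the same $w$ as left and right eigenvector for eigenvalue $1$.) *)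

theory Defs
  imports "HOL-Analysis.Analysis"
begin

definition nonneg_mat :: "real^'n^'n \<Rightarrow> bool" where
  "nonneg_mat A \<longleftrightarrow> (\<forall>i j. A$i$j \<ge> 0)"

definition irreducible_mat :: "real^'n^'n \<Rightarrow> bool" where
  "irreducible_mat A \<longleftrightarrow> (\<forall>i j. (i, j) \<in> {(k, l). A$k$l \<noteq> 0}\<^sup>*)"

definition largest_eigenvalue_one :: "real^'n^'n \<Rightarrow> bool" where
  "largest_eigenvalue_one A \<longleftrightarrow>
     (\<exists>v::real^'n. v \<noteq> 0 \<and> A *v v = v) \<and>
     (\<forall>(\<mu>::complex) (v::complex^'n). v \<noteq> 0 \<and> map_matrix complex_of_real A *v v = \<mu> *s v
        \<longrightarrow> cmod \<mu> \<le> 1)"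

definition pos_vec :: "real^'n \<Rightarrow> bool" where
  "pos_vec w \<longleftrightarrow> (\<forall>i. w$i > 0)"

text \<open>The vector b is
  indexed by U; we represent it as a function on the index type, only its values on U
  matter.  q is the unique vector with q_i = w_i b_i for i in U and (Lq)_i = 0 for i
  not in U, where L = I - B; the capacity is the inner product of q and Lq.\<close>
definition cap :: "'n set \<Rightarrow> ('n \<Rightarrow> real) \<Rightarrow> real^'n \<Rightarrow> real^'n^'n \<Rightarrow> real" where
  "cap U b w B =
     (let L = mat 1 - B;
          q = (THE q::real^'n. (\<forall>i\<in>U. q$i = w$i * b i) \<and> (\<forall>i. i \<notin> U \<longrightarrow> (L *v q)$i = 0))
      in q \<bullet> (L *v q))"

definition A_alpha :: "real \<Rightarrow> real^'n^'n \<Rightarrow> real^'n^'n" where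
  "A_alpha \<alpha> A = \<alpha> *\<^sub>R A + (1 - \<alpha>) *\<^sub>R transpose A"

end

theory Submission
  imports Defs
begin

text \<open>Write \<open>L\<^sub>\<alpha> = I - A\<^sub>\<alpha>\<close>. The quadratic form \<open>x \<bullet> L\<^sub>\<alpha> x = x \<bullet> x - x \<bullet> A x\<close> does not
  depend on \<open>\<alpha>\<close>; since \<open>w\<close> is a left and right fixed vector of \<open>A\<close>, twice this Dirichlet
  form \<open>E(x)\<close> equals \<open>\<Sum>\<^sub>i\<^sub>j A\<^sub>i\<^sub>j w\<^sub>i w\<^sub>j (x\<^sub>i/w\<^sub>i - x\<^sub>j/w\<^sub>j)\<^sup>2\<close>, so it is nonnegative and, by
  irreducibility, vanishes only on multiples of \<open>w\<close>. Hence the boundary value problem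
  defining the capacity is uniquely solvable. Testing the equations for the solutions
  \<open>q\<^sub>\<alpha>, q\<^sub>\<beta>\<close> against \<open>d = q\<^sub>\<beta> - q\<^sub>\<alpha>\<close>, which vanishes on \<open>U\<close>, and eliminating the cross
  terms gives \<open>(\<alpha> - \<beta>) (cap(A\<^sub>\<beta>) - cap(A\<^sub>\<alpha>)) = (1 - \<alpha> - \<beta>) E(d)\<close>, which is nonnegative
  for \<open>\<alpha> + \<beta> \<le> 1\<close>.\<close>

definition dirichlet_form :: "real^'n^'n \<Rightarrow> real^'n \<Rightarrow> real" where
  "dirichlet_form A x = x \<bullet> x - x \<bullet> (A *v x)"

definition dirichlet_solution :: "'n set \<Rightarrow> ('n \<Rightarrow> real) \<Rightarrow> real^'n^'n \<Rightarrow> real^'n \<Rightarrow> bool" where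
  "dirichlet_solution U g L q \<longleftrightarrow> (\<forall>i\<in>U. q$i = g i) \<and> (\<forall>i. i \<notin> U \<longrightarrow> (L *v q)$i = 0)"

lemma inner_transpose_mult:
  fixes A :: "real^'n^'n"
  shows "x \<bullet> (transpose A *v y) = y \<bullet> (A *v x)"
  by (metis inner_commute dot_lmul_matrix transpose_matrix_vector)

lemma inner_eq_0_disjoint_support:
  fixes x y :: "real^'n"
  assumes "\<And>i. i \<in> U \<Longrightarrow> x$i = 0" and "\<And>i. i \<notin> U \<Longrightarrow> y$i = 0"
  shows "x \<bullet> y = 0"
  unfolding inner_vec_def using assms by (intro sum.neutral) auto

lemma A_alpha_laplacian_mult:
  fixes A :: "real^'n^'n"
  shows "(mat 1 - A_alpha a A) *v v = v - a *\<^sub>R (A *v v) - (1 - a) *\<^sub>R (transpose A *v v)"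
  unfolding A_alpha_def matrix_vector_mult_diff_rdistrib matrix_vector_mult_add_rdistrib
    scaleR_matrix_vector_assoc[symmetric] by simp

lemma inner_A_alpha_laplacian_self:
  fixes A :: "real^'n^'n"
  shows "x \<bullet> ((mat 1 - A_alpha a A) *v x) = dirichlet_form A x"
  unfolding A_alpha_laplacian_mult dirichlet_form_def inner_diff_right inner_scaleR_right
    inner_transpose_mult[of x A x] by algebra

lemma dirichlet_form_sum_squares:
  fixes A :: "real^'n^'n"
  assumes w_nz: "\<And>i. w$i \<noteq> 0" and "A *v w = w" and "transpose A *v w = w"
  shows "2 * dirichlet_form A x =
     (\<Sum>i\<in>UNIV. \<Sum>j\<in>UNIV. A$i$j * w$i * w$j * (x$i/w$i - x$j/w$j)^2)"
proof -
  have row: "(\<Sum>j\<in>UNIV. A$i$j * w$j) = w$i" for i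
    using \<open>A *v w = w\<close> by (simp add: vec_eq_iff matrix_vector_mult_def)
  have col: "(\<Sum>i\<in>UNIV. A$i$j * w$i) = w$j" for j
    using \<open>transpose A *v w = w\<close>
    by (simp add: vec_eq_iff matrix_vector_mult_def transpose_def mult.commute)
  have expand: "A$i$j * w$i * w$j * (x$i/w$i - x$j/w$j)^2
     = (x$i * x$i / w$i) * (A$i$j * w$j) + (x$j * x$j / w$j) * (A$i$j * w$i)
       - 2 * (x$i * (A$i$j * x$j))" for i j
    using w_nz[of i] w_nz[of j] by (simp add: field_simps power2_eq_square)
  have rows: "(\<Sum>i\<in>UNIV. \<Sum>j\<in>UNIV. (x$i * x$i / w$i) * (A$i$j * w$j)) = x \<bullet> x"
  proof -
    have "(\<Sum>j\<in>UNIV. (x$i * x$i / w$i) * (A$i$j * w$j)) = x$i * x$i" for i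
      by (subst sum_distrib_left[symmetric]) (simp add: row w_nz)
    then show ?thesis by (simp add: inner_vec_def)
  qed
  have cols: "(\<Sum>i\<in>UNIV. \<Sum>j\<in>UNIV. (x$j * x$j / w$j) * (A$i$j * w$i)) = x \<bullet> x"
  proof -
    have "(\<Sum>i\<in>UNIV. (x$j * x$j / w$j) * (A$i$j * w$i)) = x$j * x$j" for j
      by (subst sum_distrib_left[symmetric]) (simp add: col w_nz)
    then show ?thesis by (subst sum.swap) (simp add: inner_vec_def)
  qed
  have cross: "(\<Sum>i\<in>UNIV. \<Sum>j\<in>UNIV. 2 * (x$i * (A$i$j * x$j))) = 2 * (x \<bullet> (A *v x))"
    by (simp add: sum_distrib_left[symmetric] inner_vec_def matrix_vector_mult_def)
  show ?thesis
    unfolding expand sum_subtractf sum.distrib rows cols cross dirichlet_form_def by simp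
qed

context
  fixes A :: "real^'n^'n" and w :: "real^'n"
  assumes nonneg: "nonneg_mat A" and pos: "pos_vec w"
    and right_fixed: "A *v w = w" and left_fixed: "transpose A *v w = w"
begin

lemma dirichlet_term_nonneg: "0 \<le> A$i$j * w$i * w$j * (x$i/w$i - x$j/w$j)^2"
  using nonneg pos unfolding nonneg_mat_def pos_vec_def
  by (intro mult_nonneg_nonneg) (auto simp: less_imp_le)

lemma dirichlet_form_nonneg: "0 \<le> dirichlet_form A x"
proof -
  have "w$i \<noteq> 0" for i using pos unfolding pos_vec_def by (simp add: less_imp_neq[symmetric])
  then have "2 * dirichlet_form A x =
      (\<Sum>i\<in>UNIV. \<Sum>j\<in>UNIV. A$i$j * w$i * w$j * (x$i/w$i - x$j/w$j)^2)"
    by (rule dirichlet_form_sum_squares[OF _ right_fixed left_fixed])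
  also have "\<dots> \<ge> 0" by (intro sum_nonneg dirichlet_term_nonneg)
  finally show ?thesis by simp
qed

lemma dirichlet_form_eq_0_imp_edge_ratio_eq:
  assumes "dirichlet_form A x = 0" and "A$i$j \<noteq> 0"
  shows "x$i/w$i = x$j/w$j"
proof -
  have w_pos: "w$k > 0" for k using pos unfolding pos_vec_def by auto
  then have "w$k \<noteq> 0" for k by (simp add: less_imp_neq[symmetric])
  then have "(\<Sum>i\<in>UNIV. \<Sum>j\<in>UNIV. A$i$j * w$i * w$j * (x$i/w$i - x$j/w$j)^2) = 0"
    using dirichlet_form_sum_squares[OF _ right_fixed left_fixed, of x] assms(1) by simp
  then have "A$i$j * w$i * w$j * (x$i/w$i - x$j/w$j)^2 = 0"
    by (simp add: sum_nonneg_eq_0_iff sum_nonneg dirichlet_term_nonneg)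
  then show ?thesis using assms(2) w_pos[of i] w_pos[of j] by simp
qed

lemma dirichlet_form_eq_0_imp_zero:
  assumes "irreducible_mat A" and "dirichlet_form A x = 0" and "x$k = 0"
  shows "x = 0"
proof -
  have "x$k/w$k = x$j/w$j" for j
  proof -
    have "(k, j) \<in> {(k, l). A$k$l \<noteq> 0}\<^sup>*"
      using \<open>irreducible_mat A\<close> unfolding irreducible_mat_def by blast
    then show ?thesis
      by (induction rule: rtrancl_induct)
        (auto dest: dirichlet_form_eq_0_imp_edge_ratio_eq[OF assms(2)])
  qed
  then show ?thesis
    using \<open>x$k = 0\<close> pos unfolding pos_vec_def by (simp add: vec_eq_iff less_imp_neq[symmetric])
qed

lemma A_alpha_dirichlet_solution_zero:
  assumes "irreducible_mat A" and "U \<noteq> {}"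
    and "dirichlet_solution U (\<lambda>_. 0) (mat 1 - A_alpha a A) v"
  shows "v = 0"
proof -
  have "v \<bullet> ((mat 1 - A_alpha a A) *v v) = 0"
    using assms(3) unfolding dirichlet_solution_def
    by (intro inner_eq_0_disjoint_support[where U = U]) auto
  then have "dirichlet_form A v = 0" by (simp only: inner_A_alpha_laplacian_self)
  moreover obtain k where "k \<in> U" using \<open>U \<noteq> {}\<close> by blast
  ultimately show ?thesis
    using assms(3) dirichlet_form_eq_0_imp_zero[OF \<open>irreducible_mat A\<close>]
    unfolding dirichlet_solution_def by blast
qed

end

lemma dirichlet_solution_ex1:
  fixes L :: "real^'n^'n"
  assumes zero: "\<And>v. dirichlet_solution U (\<lambda>_. 0) L v \<Longrightarrow> v = 0"
  shows "\<exists>!q. dirichlet_solution U g L q"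
proof -
  define T where "T = (\<lambda>v::real^'n. \<chi> i. if i \<in> U then v$i else (L *v v)$i)"
  have T_iff: "T v = (\<chi> i. if i \<in> U then g i else 0) \<longleftrightarrow> dirichlet_solution U g L v"
    for v g by (auto simp: T_def dirichlet_solution_def vec_eq_iff)
  have lin: "linear T"
    by (rule linearI)
      (simp_all add: T_def vec_eq_iff matrix_vector_right_distrib matrix_vector_mult_scaleR)
  have "inj T"
  proof (rule injI)
    fix x y assume "T x = T y"
    then have "T (x - y) = (\<chi> i. if i \<in> U then 0 else 0)"
      using linear_diff[OF lin] by (simp add: vec_eq_iff)
    then have "dirichlet_solution U (\<lambda>_. 0) L (x - y)"
      using T_iff[of "x - y" "\<lambda>_. 0"] by simp
    then have "x - y = 0" by (rule zero)
    then show "x = y" by simp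
  qed
  moreover have "surj T"
    using linear_injective_imp_surjective[OF lin \<open>inj T\<close>] by simp
  then obtain q where q: "(\<chi> i. if i \<in> U then g i else 0) = T q" by (rule surjE)
  show ?thesis
  proof (rule ex1I)
    show "dirichlet_solution U g L q" using T_iff[of q g] q by simp
  next
    fix y assume "dirichlet_solution U g L y"
    then have "T y = T q" using T_iff[of y g] q by simp
    with \<open>inj T\<close> show "y = q" by (rule injD)
  qed
qed

lemma cap_eq_dirichlet_solution:
  assumes "\<exists>!q. dirichlet_solution U (\<lambda>i. w$i * b i) (mat 1 - B) q"
    and "dirichlet_solution U (\<lambda>i. w$i * b i) (mat 1 - B) q"
  shows "cap U b w B = q \<bullet> ((mat 1 - B) *v q)"
proof -
  have "(THE q. dirichlet_solution U (\<lambda>i. w$i * b i) (mat 1 - B) q) = q"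
    by (rule the1_equality[OF assms])
  then show ?thesis unfolding cap_def Let_def dirichlet_solution_def by simp
qed

lemma A_alpha_capacity_difference:
  fixes A :: "real^'n^'n"
  assumes q\<^sub>\<alpha>: "dirichlet_solution U g (mat 1 - A_alpha \<alpha> A) q\<^sub>\<alpha>"
    and q\<^sub>\<beta>: "dirichlet_solution U g (mat 1 - A_alpha \<beta> A) q\<^sub>\<beta>"
  shows "(\<alpha> - \<beta>) * (q\<^sub>\<beta> \<bullet> ((mat 1 - A_alpha \<beta> A) *v q\<^sub>\<beta>) - q\<^sub>\<alpha> \<bullet> ((mat 1 - A_alpha \<alpha> A) *v q\<^sub>\<alpha>))
    = (1 - \<alpha> - \<beta>) * dirichlet_form A (q\<^sub>\<beta> - q\<^sub>\<alpha>)"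
proof -
  define d where "d = q\<^sub>\<beta> - q\<^sub>\<alpha>"
  have d_U: "i \<in> U \<Longrightarrow> d$i = 0" for i
    using q\<^sub>\<alpha> q\<^sub>\<beta> unfolding dirichlet_solution_def d_def by simp
  have eq\<^sub>\<alpha>: "d \<bullet> ((mat 1 - A_alpha \<alpha> A) *v q\<^sub>\<alpha>) = 0"
    using q\<^sub>\<alpha> unfolding dirichlet_solution_def by (intro inner_eq_0_disjoint_support d_U) auto
  have eq\<^sub>\<beta>: "d \<bullet> ((mat 1 - A_alpha \<beta> A) *v q\<^sub>\<beta>) = 0"
    using q\<^sub>\<beta> unfolding dirichlet_solution_def by (intro inner_eq_0_disjoint_support d_U) auto
  have q\<^sub>\<beta>_eq: "q\<^sub>\<beta> = q\<^sub>\<alpha> + d" unfolding d_def by simp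
  define n where "n = q\<^sub>\<alpha> \<bullet> d"
  define a where "a = q\<^sub>\<alpha> \<bullet> (A *v d)"
  define a' where "a' = d \<bullet> (A *v q\<^sub>\<alpha>)"
  define e where "e = d \<bullet> (A *v d)"
  have eq\<^sub>\<alpha>': "n - \<alpha> * a' - (1 - \<alpha>) * a = 0"
    using eq\<^sub>\<alpha> unfolding A_alpha_laplacian_mult inner_diff_right inner_scaleR_right
      inner_transpose_mult n_def a_def a'_def by (simp add: inner_commute)
  have eq\<^sub>\<beta>': "n + d \<bullet> d - \<beta> * (a' + e) - (1 - \<beta>) * (a + e) = 0"
    using eq\<^sub>\<beta> unfolding q\<^sub>\<beta>_eq A_alpha_laplacian_mult inner_diff_right inner_scaleR_right
      inner_transpose_mult matrix_vector_right_distrib inner_add_left inner_add_right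
      n_def a_def a'_def e_def by (simp add: inner_commute algebra_simps)
  have "q\<^sub>\<beta> \<bullet> ((mat 1 - A_alpha \<beta> A) *v q\<^sub>\<beta>) - q\<^sub>\<alpha> \<bullet> ((mat 1 - A_alpha \<alpha> A) *v q\<^sub>\<alpha>)
      = dirichlet_form A (q\<^sub>\<alpha> + d) - dirichlet_form A q\<^sub>\<alpha>"
    by (simp only: inner_A_alpha_laplacian_self q\<^sub>\<beta>_eq)
  also have "\<dots> = 2 * n - a - a' + d \<bullet> d - e"
    unfolding dirichlet_form_def matrix_vector_right_distrib inner_add_left inner_add_right
      n_def a_def a'_def e_def
    by (simp add: inner_commute)
  moreover have "(\<alpha> - \<beta>) * (2 * n - a - a' + d \<bullet> d - e) = (1 - \<alpha> - \<beta>) * (d \<bullet> d - e)"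
  proof -
    have "(\<alpha> - \<beta>) * (2 * n - a - a' + d \<bullet> d - e) - (1 - \<alpha> - \<beta>) * (d \<bullet> d - e)
        = (1 - 2 * \<beta>) * (n - \<alpha> * a' - (1 - \<alpha>) * a)
          + (2 * \<alpha> - 1) * (n + d \<bullet> d - \<beta> * (a' + e) - (1 - \<beta>) * (a + e))"
      by (simp add: algebra_simps)
    then show ?thesis unfolding eq\<^sub>\<alpha>' eq\<^sub>\<beta>' by simp
  qed
  ultimately show ?thesis by (simp add: dirichlet_form_def d_def[symmetric] e_def[symmetric])
qed

theorem theorem1p5:
  fixes A :: "real^'n^'n" and w :: "real^'n" and U :: "'n set" and b :: "'n \<Rightarrow> real"
    and \<alpha> \<beta> :: real
  assumes "nonneg_mat A" and "irreducible_mat A" and "largest_eigenvalue_one A"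
    and "pos_vec w" and "A *v w = w" and "transpose A *v w = w"
    and "U \<noteq> {}" and "U \<noteq> UNIV"
    and "0 \<le> \<beta>" and "\<beta> \<le> \<alpha>" and "\<alpha> \<le> 1/2"
  shows "cap U b w (A_alpha \<alpha> A) \<le> cap U b w (A_alpha \<beta> A)"
proof -
  let ?g = "\<lambda>i. w$i * b i"
  have ex1: "\<exists>!q. dirichlet_solution U ?g (mat 1 - A_alpha a A) q" for a
    by (rule dirichlet_solution_ex1, rule A_alpha_dirichlet_solution_zero[OF assms(1,4-6,2,7)])
  obtain q\<^sub>\<alpha> q\<^sub>\<beta> where q\<^sub>\<alpha>: "dirichlet_solution U ?g (mat 1 - A_alpha \<alpha> A) q\<^sub>\<alpha>"
    and q\<^sub>\<beta>: "dirichlet_solution U ?g (mat 1 - A_alpha \<beta> A) q\<^sub>\<beta>"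
    using ex1 by metis
  have "0 \<le> 1 - \<alpha> - \<beta>" using assms(9-11) by linarith
  then have "0 \<le> (1 - \<alpha> - \<beta>) * dirichlet_form A (q\<^sub>\<beta> - q\<^sub>\<alpha>)"
    using dirichlet_form_nonneg[OF assms(1,4-6)] by (rule mult_nonneg_nonneg)
  then have diff: "0 \<le> (\<alpha> - \<beta>) * (cap U b w (A_alpha \<beta> A) - cap U b w (A_alpha \<alpha> A))"
    unfolding cap_eq_dirichlet_solution[OF ex1 q\<^sub>\<alpha>] cap_eq_dirichlet_solution[OF ex1 q\<^sub>\<beta>]
      A_alpha_capacity_difference[OF q\<^sub>\<alpha> q\<^sub>\<beta>] .
  show ?thesis
  proof (cases "\<alpha> = \<beta>")
    case False
    then show ?thesis using diff \<open>\<beta> \<le> \<alpha>\<close> by (simp add: zero_le_mult_iff)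
  qed simp
qed

end
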